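(* There is a constant $C>0$ such that for every integer $n\ge 1$, every graph on $n$ vertices has at most $C\cdot \rho^n\cdot n$ minimal separators, where $\rho = \frac{1+\sqrt{5}}{2}$ is the golden ratio. That is, $\mathrm{sep}(n) = O(\rho^n\cdot n)$.
   Context: All graphs are finite and simple. For a graph $G=(V,E)$ and two vertices $a,b\in V$, a set $S\subseteq V\setminus\{a,b\}$ is an $(a,b)$-separator if $a$ and $b$ lie in different connected components of $G-S$ (the graph obtained by deleting the vertices of $S$). An $(a,b)$-separator is minimal if no proper subset of it is an $(a,b)$-separator. A set $S\subset V$ is a minimal separator of $G$ if it is a minimal $(a,b)$-separator for some pair of distinct vertices $a,b\in V$. $\mathrm{sep}(n)$ denotes the maximum, over all graphs on $n$ vertices, of the number of minimal separators of the graph. *)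

theory Defs
  imports "HOL-Analysis.Analysis"
begin

definition simple_graph :: "'a set \<Rightarrow> ('a \<Rightarrow> 'a \<Rightarrow> bool) \<Rightarrow> bool" where
  "simple_graph V E \<longleftrightarrow> finite V \<and> (\<forall>x y. E x y \<longrightarrow> x \<in> V \<and> y \<in> V)
     \<and> (\<forall>x y. E x y \<longrightarrow> E y x) \<and> (\<forall>x. \<not> E x x)"

definition connected_in_minus :: "'a set \<Rightarrow> ('a \<Rightarrow> 'a \<Rightarrow> bool) \<Rightarrow> 'a set \<Rightarrow> 'a \<Rightarrow> 'a \<Rightarrow> bool" where
  "connected_in_minus V E S x y \<longleftrightarrow> x \<in> V - S \<and> y \<in> V - S \<and>
     (\<lambda>u v. E u v \<and> u \<in> V - S \<and> v \<in> V - S)\<^sup>*\<^sup>* x y"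

definition is_separator :: "'a set \<Rightarrow> ('a \<Rightarrow> 'a \<Rightarrow> bool) \<Rightarrow> 'a \<Rightarrow> 'a \<Rightarrow> 'a set \<Rightarrow> bool" where
  "is_separator V E a b S \<longleftrightarrow> S \<subseteq> V - {a, b} \<and> \<not> connected_in_minus V E S a b"

definition is_minimal_separator :: "'a set \<Rightarrow> ('a \<Rightarrow> 'a \<Rightarrow> bool) \<Rightarrow> 'a \<Rightarrow> 'a \<Rightarrow> 'a set \<Rightarrow> bool" where
  "is_minimal_separator V E a b S \<longleftrightarrow> is_separator V E a b S \<and>
     (\<forall>T. T \<subset> S \<longrightarrow> \<not> is_separator V E a b T)"

definition minimal_separators :: "'a set \<Rightarrow> ('a \<Rightarrow> 'a \<Rightarrow> bool) \<Rightarrow> 'a set set" where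
  "minimal_separators V E = {S. \<exists>a\<in>V. \<exists>b\<in>V. a \<noteq> b \<and> is_minimal_separator V E a b S}"

definition golden_ratio :: real where
  "golden_ratio = (1 + sqrt 5) / 2"

end

theory Submission
  imports Defs
begin

text \<open>A minimal \<open>(a,b)\<close>-separator \<open>S\<close> is the neighbourhood of both the component of \<open>a\<close>
  and the component of \<open>b\<close> in \<open>G - S\<close>; the smaller of them, \<open>D\<close>, satisfies
  \<open>2 |D| + |S| \<le> n\<close>. Hence \<open>S = N(D)\<close> for a connected set \<open>D\<close> containing a root \<open>r\<close> with
  \<open>2 (|D| - 1) + |N(D)| \<le> n - 2\<close>. Such sets are counted by branching on a vertex \<open>u\<close>
  adjacent to the part of \<open>D\<close> fixed so far: either \<open>u \<in> D\<close>, which costs 2 of the budget,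
  or \<open>u \<in> N(D)\<close>, which costs 1. Since \<open>\<phi>^m = \<phi>^(m-1) + \<phi>^(m-2)\<close>, there are at most
  \<open>\<phi>^(n-2)\<close> such sets per root, and at most \<open>n \<phi>^(n-2)\<close> minimal separators.\<close>

lemma golden_ratio_ge_1: "golden_ratio \<ge> 1"
  unfolding golden_ratio_def using real_sqrt_ge_one[of 5] by simp

lemma golden_ratio_square: "golden_ratio ^ 2 = golden_ratio + 1"
  unfolding golden_ratio_def by (simp add: power2_eq_square field_simps)

lemma add_le_of_golden_ratio_branches:
  fixes a b M :: real
  assumes "a * golden_ratio ^ 2 \<le> M" and "b * golden_ratio \<le> M"
  shows "a + b \<le> M"
proof -
  have "(a + b) * golden_ratio ^ 2 = a * golden_ratio ^ 2 + (b * golden_ratio) * golden_ratio"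
    by (simp add: power2_eq_square algebra_simps)
  also have "\<dots> \<le> M + M * golden_ratio"
    using assms golden_ratio_ge_1 by (intro add_mono mult_right_mono) auto
  also have "\<dots> = M * golden_ratio ^ 2"
    by (simp add: golden_ratio_square algebra_simps)
  finally show ?thesis
    using golden_ratio_ge_1 by simp
qed

lemma card_mult_golden_ratio_pow_le:
  assumes "finite F" and "A \<subseteq> F" and "A \<noteq> {} \<Longrightarrow> k \<le> m"
    and "real (card F) \<le> golden_ratio ^ (m - k)"
  shows "real (card A) * golden_ratio ^ k \<le> golden_ratio ^ m"
proof (cases "A = {}")
  case False
  have "real (card A) \<le> golden_ratio ^ (m - k)"
    using card_mono[OF assms(1,2)] assms(4) by linarith
  then have "real (card A) * golden_ratio ^ k \<le> golden_ratio ^ (m - k) * golden_ratio ^ k"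
    using golden_ratio_ge_1 by (intro mult_right_mono) auto
  also have "\<dots> = golden_ratio ^ m"
    using assms(3)[OF False] by (simp flip: power_add)
  finally show ?thesis .
qed (use golden_ratio_ge_1 in simp)

definition neighbourhood :: "'a set \<Rightarrow> ('a \<Rightarrow> 'a \<Rightarrow> bool) \<Rightarrow> 'a set \<Rightarrow> 'a set" where
  "neighbourhood V E D = {x \<in> V. x \<notin> D \<and> (\<exists>y\<in>D. E y x)}"

text \<open>Every vertex of \<open>D\<close> is reachable from \<open>C\<close> inside \<open>D\<close>, phrased as: no proper subset of
  \<open>D\<close> containing \<open>C\<close> is closed under edges of \<open>D\<close>.\<close>
definition connected_extension :: "('a \<Rightarrow> 'a \<Rightarrow> bool) \<Rightarrow> 'a set \<Rightarrow> 'a set \<Rightarrow> bool" where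
  "connected_extension E C D \<longleftrightarrow>
     (\<forall>Y. C \<subseteq> Y \<and> Y \<subset> D \<longrightarrow> (\<exists>y\<in>Y. \<exists>z\<in>D - Y. E y z))"

text \<open>In the branching, \<open>C\<close> collects the vertices already put into \<open>D\<close> and \<open>X\<close> those already
  put into its neighbourhood; both have been paid for, so only the rest counts against \<open>m\<close>.\<close>
definition bounded_extensions ::
    "'a set \<Rightarrow> ('a \<Rightarrow> 'a \<Rightarrow> bool) \<Rightarrow> 'a set \<Rightarrow> 'a set \<Rightarrow> nat \<Rightarrow> 'a set set" where
  "bounded_extensions V E C X m = {D. C \<subseteq> D \<and> D \<subseteq> V \<and> D \<inter> X = {} \<and> connected_extension E C D \<and>
      2 * card (D - C) + card (neighbourhood V E D - X) \<le> m}"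

lemma finite_bounded_extensions: "finite V \<Longrightarrow> finite (bounded_extensions V E C X m)"
  by (rule finite_subset[of _ "Pow V"]) (auto simp: bounded_extensions_def)

lemma bounded_extensions_subset_singleton:
  assumes "neighbourhood V E C \<subseteq> X"
  shows "bounded_extensions V E C X m \<subseteq> {C}"
proof
  fix D assume D: "D \<in> bounded_extensions V E C X m"
  have "D = C"
  proof (rule ccontr)
    assume "D \<noteq> C"
    moreover have "C \<subseteq> D" "connected_extension E C D"
      using D by (simp_all add: bounded_extensions_def)
    ultimately obtain y z where "y \<in> C" "z \<in> D - C" "E y z"
      unfolding connected_extension_def by (metis order_refl psubsetI)
    moreover have "D \<subseteq> V" "D \<inter> X = {}"
      using D by (simp_all add: bounded_extensions_def)
    ultimately have "z \<in> neighbourhood V E C - X"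
      by (auto simp: neighbourhood_def)
    with assms show False by blast
  qed
  then show "D \<in> {C}" by simp
qed

lemma connected_extension_mono:
  assumes "connected_extension E C D" and "C \<subseteq> C'"
  shows "connected_extension E C' D"
  unfolding connected_extension_def
proof (intro allI impI)
  fix Y assume "C' \<subseteq> Y \<and> Y \<subset> D"
  with assms show "\<exists>y\<in>Y. \<exists>z\<in>D - Y. E y z"
    unfolding connected_extension_def by (meson order_trans)
qed

lemma bounded_extensions_insert_vertex:
  assumes D: "D \<in> bounded_extensions V E C X m" and "finite V" "u \<in> D" "u \<notin> C"
  shows "2 \<le> m \<and> D \<in> bounded_extensions V E (insert u C) X (m - 2)"
proof -
  have "D \<subseteq> V" using D by (simp add: bounded_extensions_def)
  then have "finite D" using \<open>finite V\<close> by (rule finite_subset)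
  then have "0 < card (D - C)"
    using assms by (auto simp: card_gt_0_iff)
  moreover have "card (D - insert u C) = card (D - C) - 1"
    using assms by simp
  moreover have "2 * card (D - C) + card (neighbourhood V E D - X) \<le> m"
    using D by (simp add: bounded_extensions_def)
  ultimately have "2 \<le> m \<and> 2 * card (D - insert u C) + card (neighbourhood V E D - X) \<le> m - 2"
    by linarith
  moreover have "connected_extension E (insert u C) D"
    using D by (auto simp: bounded_extensions_def intro: connected_extension_mono)
  ultimately show ?thesis
    using D \<open>u \<in> D\<close> by (simp add: bounded_extensions_def)
qed

lemma bounded_extensions_exclude_vertex:
  assumes D: "D \<in> bounded_extensions V E C X m" and "finite V"
    and u: "u \<in> neighbourhood V E C" "u \<notin> X" "u \<notin> D"
  shows "1 \<le> m \<and> D \<in> bounded_extensions V E C (insert u X) (m - 1)"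
proof -
  have "u \<in> neighbourhood V E D"
    using D u by (auto simp: neighbourhood_def bounded_extensions_def)
  moreover have "finite (neighbourhood V E D)"
    using \<open>finite V\<close> by (simp add: neighbourhood_def)
  ultimately have "0 < card (neighbourhood V E D - X)"
    using \<open>u \<notin> X\<close> by (auto simp: card_gt_0_iff)
  moreover have "card (neighbourhood V E D - insert u X) = card (neighbourhood V E D - X) - 1"
    using \<open>u \<in> neighbourhood V E D\<close> \<open>u \<notin> X\<close> by simp
  moreover have "2 * card (D - C) + card (neighbourhood V E D - X) \<le> m"
    using D by (simp add: bounded_extensions_def)
  ultimately have "1 \<le> m \<and> 2 * card (D - C) + card (neighbourhood V E D - insert u X) \<le> m - 1"
    by linarith
  then show ?thesis
    using D \<open>u \<notin> D\<close> by (simp add: bounded_extensions_def)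
qed

lemma card_bounded_extensions_le:
  assumes "finite V" and "C \<subseteq> V"
  shows "real (card (bounded_extensions V E C X m)) \<le> golden_ratio ^ m"
  using assms(2)
proof (induction "card (V - C - X)" arbitrary: C X m rule: less_induct)
  case less
  let ?F = "bounded_extensions V E C X m"
  show ?case
  proof (cases "neighbourhood V E C \<subseteq> X")
    case True
    then have "card ?F \<le> card {C}"
      by (intro card_mono bounded_extensions_subset_singleton) simp_all
    then have "real (card ?F) \<le> 1"
      by simp
    then show ?thesis
      using golden_ratio_ge_1 one_le_power[of golden_ratio m] by linarith
  next
    case False
    then obtain u where u: "u \<in> neighbourhood V E C" "u \<notin> X" by auto
    then have "u \<in> V" "u \<notin> C" by (auto simp: neighbourhood_def)
    have smaller: "card (V - insert u C - X) < card (V - C - X)"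
      "card (V - C - insert u X) < card (V - C - X)"
      using \<open>finite V\<close> \<open>u \<in> V\<close> \<open>u \<notin> C\<close> u(2)
      by (auto intro!: psubset_card_mono simp del: card_Diff_insert)
    let ?A = "{D \<in> ?F. u \<in> D}" and ?B = "{D \<in> ?F. u \<notin> D}"
    have A: "real (card ?A) * golden_ratio ^ 2 \<le> golden_ratio ^ m"
    proof (rule card_mult_golden_ratio_pow_le[OF finite_bounded_extensions[OF \<open>finite V\<close>]])
      show "?A \<subseteq> bounded_extensions V E (insert u C) X (m - 2)" and "?A \<noteq> {} \<Longrightarrow> 2 \<le> m"
        using bounded_extensions_insert_vertex[OF _ \<open>finite V\<close> _ \<open>u \<notin> C\<close>] by blast+
      show "real (card (bounded_extensions V E (insert u C) X (m - 2))) \<le> golden_ratio ^ (m - 2)"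
        using less.hyps[OF smaller(1)] less.prems \<open>u \<in> V\<close> by simp
    qed
    have B: "real (card ?B) * golden_ratio ^ 1 \<le> golden_ratio ^ m"
    proof (rule card_mult_golden_ratio_pow_le[OF finite_bounded_extensions[OF \<open>finite V\<close>]])
      show "?B \<subseteq> bounded_extensions V E C (insert u X) (m - 1)" and "?B \<noteq> {} \<Longrightarrow> 1 \<le> m"
        using bounded_extensions_exclude_vertex[OF _ \<open>finite V\<close> u] by blast+
      show "real (card (bounded_extensions V E C (insert u X) (m - 1))) \<le> golden_ratio ^ (m - 1)"
        using less.hyps[OF smaller(2)] less.prems by simp
    qed
    have "?F = ?A \<union> ?B" by blast
    then have "real (card ?F) \<le> real (card ?A) + real (card ?B)"
      using card_Un_le[of ?A ?B] by simp
    also have "\<dots> \<le> golden_ratio ^ m"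
      using add_le_of_golden_ratio_branches[OF A] B by simp
    finally show ?thesis .
  qed
qed

definition component :: "'a set \<Rightarrow> ('a \<Rightarrow> 'a \<Rightarrow> bool) \<Rightarrow> 'a set \<Rightarrow> 'a \<Rightarrow> 'a set" where
  "component V E S r = {x. connected_in_minus V E S r x}"

lemma component_subset: "component V E S r \<subseteq> V - S"
  by (auto simp: component_def connected_in_minus_def)

lemma connected_in_minus_edge:
  "x \<in> V - S \<Longrightarrow> y \<in> V - S \<Longrightarrow> E x y \<Longrightarrow> connected_in_minus V E S x y"
  by (auto simp: connected_in_minus_def)

lemma connected_in_minus_trans:
  "connected_in_minus V E S x y \<Longrightarrow> connected_in_minus V E S y z \<Longrightarrow> connected_in_minus V E S x z"
  unfolding connected_in_minus_def by (meson rtranclp_trans)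

lemma connected_in_minus_sym:
  assumes "simple_graph V E" and "connected_in_minus V E S x y"
  shows "connected_in_minus V E S y x"
proof -
  let ?R = "\<lambda>u v. E u v \<and> u \<in> V - S \<and> v \<in> V - S"
  have "?R\<^sup>*\<^sup>* x y" using assms(2) by (simp add: connected_in_minus_def)
  then have "?R\<^sup>*\<^sup>* y x"
  proof (induction rule: rtranclp_induct)
    case (step y z)
    then have "?R z y" using assms(1) by (auto simp: simple_graph_def)
    then show ?case using step.IH by (rule converse_rtranclp_into_rtranclp)
  qed simp
  then show ?thesis using assms(2) by (simp add: connected_in_minus_def)
qed

lemma component_connected_in_minus:
  "x \<in> component V E S r \<Longrightarrow> connected_in_minus V E S x y \<Longrightarrow> y \<in> component V E S r"
  unfolding component_def mem_Collect_eq by (rule connected_in_minus_trans)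

lemma neighbourhood_component_subset: "neighbourhood V E (component V E S r) \<subseteq> S"
proof
  fix x assume "x \<in> neighbourhood V E (component V E S r)"
  then obtain y where y: "y \<in> component V E S r" "E y x" "x \<in> V" "x \<notin> component V E S r"
    by (auto simp: neighbourhood_def)
  show "x \<in> S"
  proof (rule ccontr)
    assume "x \<notin> S"
    then have "connected_in_minus V E S y x"
      using y component_subset[of V E S r] by (intro connected_in_minus_edge) auto
    with y show False using component_connected_in_minus[OF y(1)] by simp
  qed
qed

lemma connected_extension_component:
  assumes "r \<in> V - S"
  shows "connected_extension E {r} (component V E S r)"
  unfolding connected_extension_def
proof (intro allI impI)
  fix Y assume Y: "{r} \<subseteq> Y \<and> Y \<subset> component V E S r"
  then obtain w where w: "w \<in> component V E S r" "w \<notin> Y" by auto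
  let ?R = "\<lambda>u v. E u v \<and> u \<in> V - S \<and> v \<in> V - S"
  have "?R\<^sup>*\<^sup>* r w" using w by (simp add: component_def connected_in_minus_def)
  then have "w \<in> Y \<or> (\<exists>y\<in>Y. \<exists>z\<in>component V E S r - Y. E y z)"
  proof (induction rule: rtranclp_induct)
    case (step y z)
    have "z \<in> component V E S r"
      using step.hyps assms
      by (auto simp: component_def connected_in_minus_def intro: rtranclp.rtrancl_into_rtrancl)
    then show ?case using step.hyps(2) step.IH by blast
  qed (use Y in auto)
  then show "\<exists>y\<in>Y. \<exists>z\<in>component V E S r - Y. E y z" using w by auto
qed

text \<open>The path from \<open>r\<close> to \<open>t\<close> that avoids \<open>S - {s}\<close> must leave the component of \<open>r\<close>,
  and it can only do so through \<open>s\<close>.\<close>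
lemma in_neighbourhood_component:
  assumes r: "r \<in> V - S" and "s \<in> S"
    and reconnected: "connected_in_minus V E (S - {s}) r t"
    and separated: "\<not> connected_in_minus V E S r t"
  shows "s \<in> neighbourhood V E (component V E S r)"
proof -
  let ?R = "\<lambda>u v. E u v \<and> u \<in> V - (S - {s}) \<and> v \<in> V - (S - {s})"
  have "?R\<^sup>*\<^sup>* r t" using reconnected by (simp add: connected_in_minus_def)
  then have "t \<in> component V E S r \<or> s \<in> neighbourhood V E (component V E S r)"
  proof (induction rule: rtranclp_induct)
    case base
    then show ?case using r by (auto simp: component_def connected_in_minus_def)
  next
    case (step y z)
    show ?case
    proof (cases "s \<in> neighbourhood V E (component V E S r)")
      case False
      with step.IH have y: "y \<in> component V E S r" by simp
      show ?thesis
      proof (cases "z = s")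
        case True
        then show ?thesis
          using y step.hyps(2) \<open>s \<in> S\<close> component_subset[of V E S r] by (auto simp: neighbourhood_def)
      next
        case False
        then have "connected_in_minus V E S y z"
          using y step.hyps(2) component_subset[of V E S r] by (intro connected_in_minus_edge) auto
        then show ?thesis using component_connected_in_minus[OF y] by simp
      qed
    qed simp
  qed
  with separated show ?thesis by (auto simp: component_def)
qed

lemma is_minimal_separator_sym:
  assumes "simple_graph V E" and "is_minimal_separator V E a b S"
  shows "is_minimal_separator V E b a S"
proof -
  have "is_separator V E a b T \<longleftrightarrow> is_separator V E b a T" for T
    using connected_in_minus_sym[OF assms(1)] by (auto simp: is_separator_def)
  with assms(2) show ?thesis by (simp add: is_minimal_separator_def)
qed

lemma neighbourhood_component_minimal_separator:
  assumes "is_minimal_separator V E a b S"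
  shows "neighbourhood V E (component V E S a) = S"
proof
  show "neighbourhood V E (component V E S a) \<subseteq> S"
    by (rule neighbourhood_component_subset)
  have S: "S \<subseteq> V - {a, b}" and separated: "\<not> connected_in_minus V E S a b"
    using assms by (auto simp: is_minimal_separator_def is_separator_def)
  show "S \<subseteq> neighbourhood V E (component V E S a)"
  proof
    fix s assume "s \<in> S"
    then have "\<not> is_separator V E a b (S - {s})"
      using assms by (auto simp: is_minimal_separator_def)
    then have reconnected: "connected_in_minus V E (S - {s}) a b"
      using S by (auto simp: is_separator_def)
    then have "a \<in> V - S"
      using S by (auto simp: connected_in_minus_def)
    from in_neighbourhood_component[OF this \<open>s \<in> S\<close> reconnected separated]
    show "s \<in> neighbourhood V E (component V E S a)" .
  qed
qed

lemma disjoint_components: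
  assumes "simple_graph V E" and "\<not> connected_in_minus V E S a b"
  shows "component V E S a \<inter> component V E S b = {}"
proof (rule ccontr)
  assume "component V E S a \<inter> component V E S b \<noteq> {}"
  then obtain x where ax: "connected_in_minus V E S a x" and bx: "connected_in_minus V E S b x"
    by (auto simp: component_def)
  have "connected_in_minus V E S a b"
    using connected_in_minus_trans[OF ax connected_in_minus_sym[OF assms(1) bx]] .
  with assms(2) show False ..
qed

lemma minimal_separator_small_full_component:
  assumes "simple_graph V E" and "S \<in> minimal_separators V E"
  obtains r where "r \<in> V - S" and "neighbourhood V E (component V E S r) = S"
    and "2 * card (component V E S r) + card S \<le> card V"
proof -
  from assms(2) obtain a b where ab: "a \<in> V" "b \<in> V" and sep: "is_minimal_separator V E a b S"
    by (auto simp: minimal_separators_def)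
  let ?A = "component V E S a" and ?B = "component V E S b"
  have S: "S \<subseteq> V - {a, b}" and separated: "\<not> connected_in_minus V E S a b"
    using sep by (auto simp: is_minimal_separator_def is_separator_def)
  have "finite V" using assms(1) by (simp add: simple_graph_def)
  have sub: "?A \<union> ?B \<union> S \<subseteq> V" and "(?A \<union> ?B) \<inter> S = {}"
    using component_subset[of V E S a] component_subset[of V E S b] S by auto
  moreover have "?A \<inter> ?B = {}"
    by (rule disjoint_components[OF assms(1) separated])
  moreover have "finite ?A" "finite ?B" "finite S"
    using sub by (auto intro: finite_subset[OF _ \<open>finite V\<close>])
  ultimately have "card (?A \<union> ?B \<union> S) = card ?A + card ?B + card S"
    by (simp add: card_Un_disjoint)
  then have card: "card ?A + card ?B + card S \<le> card V"
    using card_mono[OF \<open>finite V\<close> sub] by simp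
  have "a \<in> V - S" "b \<in> V - S" using ab S by auto
  moreover have "neighbourhood V E ?A = S"
    by (rule neighbourhood_component_minimal_separator[OF sep])
  moreover have "neighbourhood V E ?B = S"
    by (rule neighbourhood_component_minimal_separator[OF is_minimal_separator_sym[OF assms(1) sep]])
  ultimately show ?thesis
    using that[of a] that[of b] card by linarith
qed

lemma minimal_separator_neighbourhood_of_bounded_extension:
  assumes "simple_graph V E" and "S \<in> minimal_separators V E"
  shows "\<exists>r\<in>V. S \<in> neighbourhood V E ` bounded_extensions V E {r} {} (card V - 2)"
proof -
  obtain r where r: "r \<in> V - S" and N: "neighbourhood V E (component V E S r) = S"
    and small: "2 * card (component V E S r) + card S \<le> card V"
    using minimal_separator_small_full_component[OF assms] .
  let ?D = "component V E S r"
  have "r \<in> ?D" using r by (simp add: component_def connected_in_minus_def)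
  have "finite ?D"
    using assms(1) component_subset[of V E S r] by (auto simp: simple_graph_def intro: finite_subset)
  then have "0 < card ?D"
    using \<open>r \<in> ?D\<close> by (auto simp: card_gt_0_iff)
  with small have "2 * (card ?D - 1) + card S \<le> card V - 2"
    by linarith
  then have "2 * card (?D - {r}) + card (neighbourhood V E ?D - {}) \<le> card V - 2"
    using \<open>r \<in> ?D\<close> N by simp
  then have "?D \<in> bounded_extensions V E {r} {} (card V - 2)"
    using \<open>r \<in> ?D\<close> component_subset[of V E S r] connected_extension_component[OF r]
    by (auto simp: bounded_extensions_def)
  with N r show ?thesis by blast
qed

lemma card_minimal_separators_le:
  assumes "simple_graph V E"
  shows "real (card (minimal_separators V E)) \<le> real (card V) * golden_ratio ^ (card V - 2)"
proof -
  have "finite V" using assms by (simp add: simple_graph_def)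
  let ?F = "\<lambda>r. bounded_extensions V E {r} {} (card V - 2)"
  have "minimal_separators V E \<subseteq> (\<Union>r\<in>V. neighbourhood V E ` ?F r)"
    using minimal_separator_neighbourhood_of_bounded_extension[OF assms] by blast
  then have "card (minimal_separators V E) \<le> card (\<Union>r\<in>V. neighbourhood V E ` ?F r)"
    using \<open>finite V\<close> by (intro card_mono) (auto intro: finite_bounded_extensions)
  also have "\<dots> \<le> (\<Sum>r\<in>V. card (neighbourhood V E ` ?F r))"
    by (rule card_UN_le) (rule \<open>finite V\<close>)
  also have "\<dots> \<le> (\<Sum>r\<in>V. card (?F r))"
    using \<open>finite V\<close> by (intro sum_mono card_image_le finite_bounded_extensions)
  finally have "real (card (minimal_separators V E)) \<le> (\<Sum>r\<in>V. real (card (?F r)))"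
    by (simp flip: of_nat_sum)
  also have "\<dots> \<le> (\<Sum>r\<in>V. golden_ratio ^ (card V - 2))"
    using \<open>finite V\<close> by (intro sum_mono card_bounded_extensions_le) auto
  finally show ?thesis by simp
qed

theorem theorem1:
  shows "\<exists>C::real. C > 0 \<and> (\<forall>n::nat. \<forall>E :: nat \<Rightarrow> nat \<Rightarrow> bool.
     n \<ge> 1 \<longrightarrow> simple_graph {..<n} E \<longrightarrow>
     real (card (minimal_separators {..<n} E)) \<le> C * golden_ratio ^ n * real n)"
proof (intro exI[of _ 1] conjI allI impI)
  fix n :: nat and E :: "nat \<Rightarrow> nat \<Rightarrow> bool"
  assume "simple_graph {..<n} E"
  then have "real (card (minimal_separators {..<n} E)) \<le> real n * golden_ratio ^ (n - 2)"
    using card_minimal_separators_le by fastforce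
  also have "\<dots> \<le> real n * golden_ratio ^ n"
    using golden_ratio_ge_1 by (intro mult_left_mono power_increasing) auto
  finally show "real (card (minimal_separators {..<n} E)) \<le> 1 * golden_ratio ^ n * real n"
    by (simp add: mult.commute)
qed simp

end
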